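(* Let $X$ be a pre-ordered Banach space with a closed cone, and let $X'$ be its dual, ordered by the dual cone $X'_+=\{f\in X': f(x)\ge 0 \text{ for all } x\in X_+\}$. Let $\alpha>0$. Then: (1) $X'$ is approximately $\alpha$-sum-conormal if and only if $X'$ is $\alpha$-sum-conormal; (2) $X'$ is approximately $\alpha$-max-conormal if and only if $X'$ is $\alpha$-max-conormal; (3) $X'$ is approximately $\alpha$-absolutely conormal if and only if $X'$ is $\alpha$-absolutely conormal; (4) $X'$ is approximately $\alpha$-conormal if and only if $X'$ is $\alpha$-conormal.
   Context: A cone in a real Banach space $X$ is a subset $C$ with $C+C\subseteq C$ and $\lambda C\subseteq C$ for all $\lambda\ge0$. A pre-ordered Banach space is a real Banach space $X$ together with a cone $X_+$ (not assumed proper), with $x\ge y$ meaning $x-y\in X_+$. For a pre-ordered Banach space $Z$ with closed cone and $\alpha>0$: $Z$ is $\alpha$-sum-conormal if every $x\in Z$ can be written $x=a-b$ with $a,b\in Z_+$ and $\|a\|+\|b\|\le\alpha\|x\|$; approximately $\alpha$-sum-conormal if for every $x$ and $\varepsilon>0$ there are $a,b\in Z_+$ with $x=a-b$ and $\|a\|+\|b\|<\alpha\|x\|+\varepsilon$. $Z$ is $\alpha$-max-conormal (resp. approximately) if the same holds with $\max\{\|a\|,\|b\|\}$ in place of $\|a\|+\|b\|$. $Z$ is $\alpha$-absolutely conormal if for every $x$ there is $a\in Z_+$ with $-x\le a$, $x\le a$ and $\|a\|\le\alpha\|x\|$; approximately $\alpha$-absolutely conormal if for every $x$ and $\varepsilon>0$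 there is $a\in Z_+$ with $\pm x\le a$ and $\|a\|<\alpha\|x\|+\varepsilon$. $Z$ is $\alpha$-conormal if for every $x$ there is $a\in Z_+$ with $0\le a$, $x\le a$ and $\|a\|\le\alpha\|x\|$; approximately $\alpha$-conormal if for every $x$ and $\varepsilon>0$ there is $a$ with $0\le a$, $x\le a$, $\|a\|<\alpha\|x\|+\varepsilon$. *)

theory Defs
  imports "HOL-Analysis.Analysis"
begin

text \<open>A cone in a real vector space: closed under addition and non-negative scaling
  (not assumed proper). The pre-order is x \<le> y iff y - x \<in> K.\<close>
definition is_cone :: "'a::real_vector set \<Rightarrow> bool" where
  "is_cone C \<longleftrightarrow> (\<forall>x\<in>C. \<forall>y\<in>C. x + y \<in> C) \<and> (\<forall>l::real. l \<ge> 0 \<longrightarrow> (\<forall>x\<in>C. l *\<^sub>R x \<in> C))"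

definition dual_cone :: "'a::real_normed_vector set \<Rightarrow> ('a \<Rightarrow>\<^sub>L real) set" where
  "dual_cone C = {f. \<forall>x\<in>C. blinfun_apply f x \<ge> 0}"

definition sum_conormal :: "'b::real_normed_vector set \<Rightarrow> real \<Rightarrow> bool" where
  "sum_conormal K \<alpha> \<longleftrightarrow> (\<forall>x. \<exists>a\<in>K. \<exists>b\<in>K. x = a - b \<and> norm a + norm b \<le> \<alpha> * norm x)"

definition approx_sum_conormal :: "'b::real_normed_vector set \<Rightarrow> real \<Rightarrow> bool" where
  "approx_sum_conormal K \<alpha> \<longleftrightarrow>
     (\<forall>x. \<forall>\<epsilon>>0. \<exists>a\<in>K. \<exists>b\<in>K. x = a - b \<and> norm a + norm b < \<alpha> * norm x + \<epsilon>)"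

definition max_conormal :: "'b::real_normed_vector set \<Rightarrow> real \<Rightarrow> bool" where
  "max_conormal K \<alpha> \<longleftrightarrow> (\<forall>x. \<exists>a\<in>K. \<exists>b\<in>K. x = a - b \<and> max (norm a) (norm b) \<le> \<alpha> * norm x)"

definition approx_max_conormal :: "'b::real_normed_vector set \<Rightarrow> real \<Rightarrow> bool" where
  "approx_max_conormal K \<alpha> \<longleftrightarrow>
     (\<forall>x. \<forall>\<epsilon>>0. \<exists>a\<in>K. \<exists>b\<in>K. x = a - b \<and> max (norm a) (norm b) < \<alpha> * norm x + \<epsilon>)"

text \<open>-x \<le> a and x \<le> a, i.e. a - (-x) \<in> K and a - x \<in> K.\<close>
definition abs_conormal :: "'b::real_normed_vector set \<Rightarrow> real \<Rightarrow> bool" where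
  "abs_conormal K \<alpha> \<longleftrightarrow> (\<forall>x. \<exists>a\<in>K. a - (- x) \<in> K \<and> a - x \<in> K \<and> norm a \<le> \<alpha> * norm x)"

definition approx_abs_conormal :: "'b::real_normed_vector set \<Rightarrow> real \<Rightarrow> bool" where
  "approx_abs_conormal K \<alpha> \<longleftrightarrow>
     (\<forall>x. \<forall>\<epsilon>>0. \<exists>a\<in>K. a - (- x) \<in> K \<and> a - x \<in> K \<and> norm a < \<alpha> * norm x + \<epsilon>)"

text \<open>0 \<le> a and x \<le> a.\<close>
definition conormal :: "'b::real_normed_vector set \<Rightarrow> real \<Rightarrow> bool" where
  "conormal K \<alpha> \<longleftrightarrow> (\<forall>x. \<exists>a. a - 0 \<in> K \<and> a - x \<in> K \<and> norm a \<le> \<alpha> * norm x)"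

definition approx_conormal :: "'b::real_normed_vector set \<Rightarrow> real \<Rightarrow> bool" where
  "approx_conormal K \<alpha> \<longleftrightarrow>
     (\<forall>x. \<forall>\<epsilon>>0. \<exists>a. a - 0 \<in> K \<and> a - x \<in> K \<and> norm a < \<alpha> * norm x + \<epsilon>)"

end

theory Submission imports Defs begin

text \<open>Each approximate property provides, for every \<open>\<epsilon> > 0\<close>, a functional in a
  weak*-closed set of admissible functionals (given by dual-cone conditions) whose gauge
  (\<open>norm a + norm (a - x)\<close>, \<open>max (norm a) (norm (a - x))\<close> or \<open>norm a\<close>) is below
  \<open>\<alpha> * norm x + \<epsilon>\<close>. The gauges are weak*-lower semicontinuous and dominate the norm, so
  these sets meet a fixed dual ball with the finite intersection property, and by
  Banach--Alaoglu they have a common point, which witnesses the exact property.\<close>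

text \<open>The weak* topology on the dual is the one induced by the product topology on
  \<open>'a \<Rightarrow> real\<close>, i.e. pointwise convergence.\<close>
definition weak_star_closed :: "('a::real_normed_vector \<Rightarrow>\<^sub>L real) set \<Rightarrow> bool" where
  "weak_star_closed S \<longleftrightarrow> (\<exists>T. closed T \<and> S = blinfun_apply -` T)"

lemma weak_star_closedI: "closed T \<Longrightarrow> S = blinfun_apply -` T \<Longrightarrow> weak_star_closed S"
  unfolding weak_star_closed_def by blast

lemma weak_star_closed_Int:
  "weak_star_closed S \<Longrightarrow> weak_star_closed S' \<Longrightarrow> weak_star_closed (S \<inter> S')"
  unfolding weak_star_closed_def by (metis closed_Int vimage_Int)

lemma weak_star_closed_dual_cone:
  fixes C :: "'a::real_normed_vector set"
  shows "weak_star_closed (dual_cone C)"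
proof (rule weak_star_closedI)
  show "closed (\<Inter>d\<in>C. {g :: 'a \<Rightarrow> real. 0 \<le> g d})"
    by (intro closed_INT ballI closed_Collect_le continuous_on_const
        continuous_on_product_coordinates)
qed (auto simp: dual_cone_def)

lemma weak_star_closed_translation:
  assumes "weak_star_closed S"
  shows "weak_star_closed {a. a - x \<in> S}"
proof -
  obtain T where T: "closed T" "S = blinfun_apply -` T"
    using assms unfolding weak_star_closed_def by blast
  have "continuous_on UNIV (\<lambda>g y. g y - blinfun_apply x y)"
    by (intro continuous_on_coordinatewise_then_product continuous_intros
        continuous_on_product_coordinates)
  then have "closed ((\<lambda>g y. g y - blinfun_apply x y) -` T)"
    using T(1) by (simp add: closed_vimage)
  then show ?thesis
    by (rule weak_star_closedI) (auto simp: T(2) minus_blinfun.rep_eq fun_diff_def)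
qed

lemma blinfun_le_norm:
  fixes f :: "'a::real_normed_vector \<Rightarrow>\<^sub>L real"
  assumes "y \<in> cball 0 1"
  shows "f y \<le> norm f"
proof -
  have "f y \<le> norm f * norm y"
    using norm_blinfun[of f y] by simp
  also have "\<dots> \<le> norm f"
    using assms mult_left_le[of "norm y" "norm f"] by simp
  finally show ?thesis .
qed

lemma norm_blinfun_le_iff:
  fixes f :: "'a::real_normed_vector \<Rightarrow>\<^sub>L real"
  shows "norm f \<le> t \<longleftrightarrow> (\<forall>y\<in>cball 0 1. f y \<le> t)"
proof
  assume "norm f \<le> t"
  then show "\<forall>y\<in>cball 0 1. f y \<le> t"
    using blinfun_le_norm order_trans by blast
next
  assume bound: "\<forall>y\<in>cball 0 1. f y \<le> t"
  have "norm (f y) \<le> t * norm y" for y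
  proof (cases "y = 0")
    case False
    let ?u = "y /\<^sub>R norm y"
    have "f ?u \<le> t" "f (- ?u) \<le> t"
      using bound False by auto
    then have "f y \<le> t * norm y" "- f y \<le> t * norm y"
      using False by (simp_all add: blinfun.scaleR_right blinfun.minus_right field_simps)
    then show ?thesis by (simp add: abs_le_iff)
  qed simp
  moreover have "0 \<le> t"
    using bound[rule_format, of 0] by simp
  ultimately show "norm f \<le> t"
    by (rule norm_blinfun_bound[rotated])
qed

lemma norm_add_norm_blinfun_le_iff:
  fixes f g :: "'a::real_normed_vector \<Rightarrow>\<^sub>L real"
  shows "norm f + norm g \<le> t \<longleftrightarrow> (\<forall>y\<in>cball 0 1. \<forall>z\<in>cball 0 1. f y + g z \<le> t)"
proof
  assume "norm f + norm g \<le> t"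
  then show "\<forall>y\<in>cball 0 1. \<forall>z\<in>cball 0 1. f y + g z \<le> t"
    using blinfun_le_norm[of _ f] blinfun_le_norm[of _ g] by (meson add_mono order_trans)
next
  assume bound: "\<forall>y\<in>cball 0 1. \<forall>z\<in>cball 0 1. f y + g z \<le> t"
  have "g z \<le> t - norm f" if "z \<in> cball 0 1" for z
  proof -
    have "norm f \<le> t - g z"
      unfolding norm_blinfun_le_iff using bound that by (simp add: le_diff_eq)
    then show ?thesis by simp
  qed
  then have "norm g \<le> t - norm f"
    using norm_blinfun_le_iff by blast
  then show "norm f + norm g \<le> t" by simp
qed

lemma weak_star_closed_norm_le: "weak_star_closed {a. norm a \<le> t}"
proof (rule weak_star_closedI)
  show "closed (\<Inter>y\<in>cball 0 1. {g. g y \<le> t})"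
    by (intro closed_INT ballI closed_Collect_le continuous_intros continuous_on_product_coordinates)
qed (auto simp: norm_blinfun_le_iff)

lemma weak_star_closed_norm_add_norm_le: "weak_star_closed {a. norm a + norm (a - x) \<le> t}"
proof (rule weak_star_closedI)
  show "closed (\<Inter>y\<in>cball 0 1. \<Inter>z\<in>cball 0 1. {g. g y + (g z - blinfun_apply x z) \<le> t})"
    by (intro closed_INT ballI closed_Collect_le continuous_intros continuous_on_product_coordinates)
qed (auto simp: norm_add_norm_blinfun_le_iff blinfun.diff_left)

lemma weak_star_closed_max_norm_le: "weak_star_closed {a. max (norm a) (norm (a - x)) \<le> t}"
  using weak_star_closed_Int[OF weak_star_closed_norm_le
      weak_star_closed_translation[OF weak_star_closed_norm_le]]
  by (simp add: Collect_conj_eq)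

text \<open>Banach--Alaoglu, in the form of the finite intersection property for weak*-closed
  subsets of a closed ball of the dual.\<close>
lemma dual_ball_Inter_weak_star_closed_nonempty:
  fixes S :: "'i \<Rightarrow> ('a::real_normed_vector \<Rightarrow>\<^sub>L real) set"
  assumes closed: "\<And>i. i \<in> I \<Longrightarrow> weak_star_closed (S i)"
    and fip: "\<And>F. finite F \<Longrightarrow> F \<subseteq> I \<Longrightarrow> {a. norm a \<le> R} \<inter> \<Inter>(S ` F) \<noteq> {}"
  shows "{a. norm a \<le> R} \<inter> \<Inter>(S ` I) \<noteq> {}"
proof -
  obtain T where T: "\<And>i. i \<in> I \<Longrightarrow> closed (T i) \<and> S i = blinfun_apply -` T i"
    using closed unfolding weak_star_closed_def by metis
  define B :: "('a \<Rightarrow> real) set" where "B = Pi UNIV (\<lambda>y. {- R * norm y..R * norm y})"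
  define L :: "('a \<Rightarrow> real) set" where
    "L = {g. (\<forall>u v. g (u + v) = g u + g v) \<and> (\<forall>r u. g (r *\<^sub>R u) = r * g u)}"
  have "compact B"
    using compactin_PiE[of "\<lambda>_. euclidean" UNIV "\<lambda>y. {- R * norm y..R * norm y}"]
    by (simp add: B_def euclidean_product_topology PiE_UNIV_domain)
  moreover have "closed L"
    unfolding L_def
    by (intro closed_Collect_conj closed_Collect_all closed_Collect_eq continuous_intros
        continuous_on_product_coordinates)
  ultimately have "compact (B \<inter> L)"
    by (rule compact_Int_closed)
  have in_box: "blinfun_apply a \<in> B \<inter> L" if "norm a \<le> R" for a
  proof -
    have "\<bar>a y\<bar> \<le> R * norm y" for y
      using norm_blinfun[of a y] mult_right_mono[OF that norm_ge_zero[of y]] by simp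
    then have "blinfun_apply a \<in> B"
      by (auto simp: B_def abs_le_iff minus_le_iff)
    then show ?thesis
      by (simp add: L_def blinfun.add_right blinfun.scaleR_right)
  qed
  have "B \<inter> L \<inter> \<Inter>(T ` I) \<noteq> {}"
  proof (rule compact_imp_fip_image[OF \<open>compact (B \<inter> L)\<close>])
    show "closed (T i)" if "i \<in> I" for i
      using T that by blast
  next
    fix F assume "finite F" "F \<subseteq> I"
    then obtain a where "a \<in> {a. norm a \<le> R} \<inter> \<Inter>(S ` F)"
      using fip by blast
    then have a: "norm a \<le> R" "\<And>i. i \<in> F \<Longrightarrow> a \<in> S i"
      by auto
    have "blinfun_apply a \<in> T i" if "i \<in> F" for i
      using T[of i] a(2)[OF that] that \<open>F \<subseteq> I\<close> by blast
    then have "blinfun_apply a \<in> B \<inter> L \<inter> \<Inter>(T ` F)"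
      using in_box[OF a(1)] by blast
    then show "B \<inter> L \<inter> \<Inter>(T ` F) \<noteq> {}" by blast
  qed
  then obtain g where g: "g \<in> B" "g \<in> L" "\<And>i. i \<in> I \<Longrightarrow> g \<in> T i"
    by blast
  obtain a0 :: "'a \<Rightarrow>\<^sub>L real" where "norm a0 \<le> R"
    using fip[of "{}"] by auto
  then have "0 \<le> R"
    using norm_ge_zero order_trans by blast
  have bound: "norm (g y) \<le> R * norm y" for y
    using g(1) by (simp add: B_def Pi_iff abs_le_iff minus_le_iff)
  have "bounded_linear g"
  proof (rule bounded_linear_intro[where K = R])
    show "g (u + v) = g u + g v" "g (r *\<^sub>R u) = r *\<^sub>R g u" for u v r
      using g(2) by (simp_all add: L_def)
    show "norm (g y) \<le> norm y * R" for y
      using bound[of y] by (simp add: mult.commute)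
  qed
  then have g_eq: "blinfun_apply (Blinfun g) = g"
    by (rule bounded_linear_Blinfun_apply)
  have "norm (Blinfun g) \<le> R"
    using \<open>0 \<le> R\<close> bound by (intro norm_blinfun_bound) (simp_all only: g_eq)
  moreover have "Blinfun g \<in> S i" if "i \<in> I" for i
    using g(3)[OF that] T[OF that] by (simp add: g_eq)
  ultimately show ?thesis by blast
qed

lemma weak_star_closed_attains_bound:
  fixes K :: "('a::real_normed_vector \<Rightarrow>\<^sub>L real) set" and \<rho> :: "('a \<Rightarrow>\<^sub>L real) \<Rightarrow> real"
  assumes K: "weak_star_closed K"
    and sublevel: "\<And>t. weak_star_closed {a. \<rho> a \<le> t}"
    and norm_le: "\<And>a. norm a \<le> \<rho> a"
    and approx: "\<And>\<epsilon>. \<epsilon> > 0 \<Longrightarrow> \<exists>a\<in>K. \<rho> a < c + \<epsilon>"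
  shows "\<exists>a\<in>K. \<rho> a \<le> c"
proof -
  define S where "S \<epsilon> = K \<inter> {a. \<rho> a \<le> c + \<epsilon>}" for \<epsilon>
  have "{a. norm a \<le> c + 1} \<inter> \<Inter>(S ` {0<..}) \<noteq> {}"
  proof (rule dual_ball_Inter_weak_star_closed_nonempty)
    show "weak_star_closed (S \<epsilon>)" for \<epsilon>
      unfolding S_def using K sublevel by (rule weak_star_closed_Int)
  next
    fix F :: "real set" assume F: "finite F" "F \<subseteq> {0<..}"
    define \<delta> where "\<delta> = Min (insert 1 F)"
    have "0 < \<delta>" "\<delta> \<le> 1" "\<forall>\<epsilon>\<in>F. \<delta> \<le> \<epsilon>"
      using F by (auto simp: \<delta>_def)
    moreover obtain a where "a \<in> K" "\<rho> a < c + \<delta>"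
      using approx \<open>0 < \<delta>\<close> by blast
    ultimately have "a \<in> {a. norm a \<le> c + 1} \<inter> \<Inter>(S ` F)"
      using norm_le[of a] by (auto simp: S_def)
    then show "{a. norm a \<le> c + 1} \<inter> \<Inter>(S ` F) \<noteq> {}" by blast
  qed
  then obtain a where "a \<in> K" "\<And>\<epsilon>. \<epsilon> > 0 \<Longrightarrow> \<rho> a \<le> c + \<epsilon>"
    by (auto simp: S_def)
  then show ?thesis
    using field_le_epsilon by blast
qed

lemma approx_sum_conormal_dual_cone_iff:
  "approx_sum_conormal (dual_cone C) \<alpha> \<longleftrightarrow> sum_conormal (dual_cone C) \<alpha>"
proof
  assume approx: "approx_sum_conormal (dual_cone C) \<alpha>"
  show "sum_conormal (dual_cone C) \<alpha>"
    unfolding sum_conormal_def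
  proof
    fix x
    have "\<exists>a\<in>dual_cone C \<inter> {a. a - x \<in> dual_cone C}. norm a + norm (a - x) \<le> \<alpha> * norm x"
    proof (rule weak_star_closed_attains_bound)
      fix \<epsilon> :: real assume "\<epsilon> > 0"
      then obtain a b where "a \<in> dual_cone C" "b \<in> dual_cone C" "x = a - b"
          "norm a + norm b < \<alpha> * norm x + \<epsilon>"
        using approx unfolding approx_sum_conormal_def by blast
      then show "\<exists>a\<in>dual_cone C \<inter> {a. a - x \<in> dual_cone C}. norm a + norm (a - x) < \<alpha> * norm x + \<epsilon>"
        by (intro bexI[where x = a]) auto
    next
      show "weak_star_closed (dual_cone C \<inter> {a. a - x \<in> dual_cone C})"
        by (intro weak_star_closed_Int weak_star_closed_dual_cone weak_star_closed_translation)
      show "weak_star_closed {a. norm a + norm (a - x) \<le> t}" for t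
        by (rule weak_star_closed_norm_add_norm_le)
      show "norm a \<le> norm a + norm (a - x)" for a
        by simp
    qed
    then obtain a where "a \<in> dual_cone C" "a - x \<in> dual_cone C" "norm a + norm (a - x) \<le> \<alpha> * norm x"
      by blast
    then show "\<exists>a\<in>dual_cone C. \<exists>b\<in>dual_cone C. x = a - b \<and> norm a + norm b \<le> \<alpha> * norm x"
      by (intro bexI[where x = a] bexI[where x = "a - x"]) auto
  qed
next
  assume "sum_conormal (dual_cone C) \<alpha>"
  then show "approx_sum_conormal (dual_cone C) \<alpha>"
    unfolding sum_conormal_def approx_sum_conormal_def
    by (meson less_add_same_cancel1 order_le_less_trans)
qed

lemma approx_max_conormal_dual_cone_iff:
  "approx_max_conormal (dual_cone C) \<alpha> \<longleftrightarrow> max_conormal (dual_cone C) \<alpha>"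
proof
  assume approx: "approx_max_conormal (dual_cone C) \<alpha>"
  show "max_conormal (dual_cone C) \<alpha>"
    unfolding max_conormal_def
  proof
    fix x
    have "\<exists>a\<in>dual_cone C \<inter> {a. a - x \<in> dual_cone C}.
        max (norm a) (norm (a - x)) \<le> \<alpha> * norm x"
    proof (rule weak_star_closed_attains_bound)
      fix \<epsilon> :: real assume "\<epsilon> > 0"
      then obtain a b where "a \<in> dual_cone C" "b \<in> dual_cone C" "x = a - b"
          "max (norm a) (norm b) < \<alpha> * norm x + \<epsilon>"
        using approx unfolding approx_max_conormal_def by blast
      then show "\<exists>a\<in>dual_cone C \<inter> {a. a - x \<in> dual_cone C}.
          max (norm a) (norm (a - x)) < \<alpha> * norm x + \<epsilon>"
        by (intro bexI[where x = a]) auto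
    next
      show "weak_star_closed (dual_cone C \<inter> {a. a - x \<in> dual_cone C})"
        by (intro weak_star_closed_Int weak_star_closed_dual_cone weak_star_closed_translation)
      show "weak_star_closed {a. max (norm a) (norm (a - x)) \<le> t}" for t
        by (rule weak_star_closed_max_norm_le)
      show "norm a \<le> max (norm a) (norm (a - x))" for a
        by (rule max.cobounded1)
    qed
    then obtain a where "a \<in> dual_cone C" "a - x \<in> dual_cone C" "max (norm a) (norm (a - x)) \<le> \<alpha> * norm x"
      by blast
    then show "\<exists>a\<in>dual_cone C. \<exists>b\<in>dual_cone C. x = a - b \<and> max (norm a) (norm b) \<le> \<alpha> * norm x"
      by (intro bexI[where x = a] bexI[where x = "a - x"]) auto
  qed
next
  assume "max_conormal (dual_cone C) \<alpha>"
  then show "approx_max_conormal (dual_cone C) \<alpha>"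
    unfolding max_conormal_def approx_max_conormal_def
    by (meson less_add_same_cancel1 order_le_less_trans)
qed

lemma approx_abs_conormal_dual_cone_iff:
  "approx_abs_conormal (dual_cone C) \<alpha> \<longleftrightarrow> abs_conormal (dual_cone C) \<alpha>"
proof
  assume approx: "approx_abs_conormal (dual_cone C) \<alpha>"
  show "abs_conormal (dual_cone C) \<alpha>"
    unfolding abs_conormal_def
  proof
    fix x
    let ?K = "dual_cone C \<inter> {a. a - (- x) \<in> dual_cone C} \<inter> {a. a - x \<in> dual_cone C}"
    have "\<exists>a\<in>?K. norm a \<le> \<alpha> * norm x"
    proof (rule weak_star_closed_attains_bound)
      fix \<epsilon> :: real assume "\<epsilon> > 0"
      then show "\<exists>a\<in>?K. norm a < \<alpha> * norm x + \<epsilon>"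
        using approx unfolding approx_abs_conormal_def by blast
    next
      show "weak_star_closed (?K)"
        by (intro weak_star_closed_Int weak_star_closed_dual_cone weak_star_closed_translation)
      show "weak_star_closed {a. norm a \<le> t}" for t
        by (rule weak_star_closed_norm_le)
      show "norm a \<le> norm a" for a
        by (rule order_refl)
    qed
    then show "\<exists>a\<in>dual_cone C. a - (- x) \<in> dual_cone C \<and> a - x \<in> dual_cone C \<and>
        norm a \<le> \<alpha> * norm x"
      by blast
  qed
next
  assume "abs_conormal (dual_cone C) \<alpha>"
  then show "approx_abs_conormal (dual_cone C) \<alpha>"
    unfolding abs_conormal_def approx_abs_conormal_def
    by (meson less_add_same_cancel1 order_le_less_trans)
qed

lemma approx_conormal_dual_cone_iff:
  "approx_conormal (dual_cone C) \<alpha> \<longleftrightarrow> conormal (dual_cone C) \<alpha>"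
proof
  assume approx: "approx_conormal (dual_cone C) \<alpha>"
  show "conormal (dual_cone C) \<alpha>"
    unfolding conormal_def
  proof
    fix x
    let ?K = "{a. a - 0 \<in> dual_cone C} \<inter> {a. a - x \<in> dual_cone C}"
    have "\<exists>a\<in>?K. norm a \<le> \<alpha> * norm x"
    proof (rule weak_star_closed_attains_bound)
      fix \<epsilon> :: real assume "\<epsilon> > 0"
      then show "\<exists>a\<in>?K. norm a < \<alpha> * norm x + \<epsilon>"
        using approx unfolding approx_conormal_def by blast
    next
      show "weak_star_closed (?K)"
        by (intro weak_star_closed_Int weak_star_closed_dual_cone weak_star_closed_translation)
      show "weak_star_closed {a. norm a \<le> t}" for t
        by (rule weak_star_closed_norm_le)
      show "norm a \<le> norm a" for a
        by (rule order_refl)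
    qed
    then show "\<exists>a. a - 0 \<in> dual_cone C \<and> a - x \<in> dual_cone C \<and> norm a \<le> \<alpha> * norm x"
      by blast
  qed
next
  assume "conormal (dual_cone C) \<alpha>"
  then show "approx_conormal (dual_cone C) \<alpha>"
    unfolding conormal_def approx_conormal_def
    by (meson less_add_same_cancel1 order_le_less_trans)
qed

theorem lemma3p8:
  fixes C :: "'a::banach set" and \<alpha> :: real
  assumes "is_cone C" and "closed C" and "\<alpha> > 0"
  shows "(approx_sum_conormal (dual_cone C) \<alpha> \<longleftrightarrow> sum_conormal (dual_cone C) \<alpha>)
       \<and> (approx_max_conormal (dual_cone C) \<alpha> \<longleftrightarrow> max_conormal (dual_cone C) \<alpha>)
       \<and> (approx_abs_conormal (dual_cone C) \<alpha> \<longleftrightarrow> abs_conormal (dual_cone C) \<alpha>)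
       \<and> (approx_conormal (dual_cone C) \<alpha> \<longleftrightarrow> conormal (dual_cone C) \<alpha>)"
  using approx_sum_conormal_dual_cone_iff approx_max_conormal_dual_cone_iff
    approx_abs_conormal_dual_cone_iff approx_conormal_dual_cone_iff
  by blast

end
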